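(* If $n\ge 1$ is odd, then $a_{2(2)}(n)=b_2(2n+1,n+1)$. More generally, let $m,\ell\geq 2$ and let $n\ge1$ be not divisible by $\ell$, with $n=\ell k+r$ for integers $k$ and $1\leq r<\ell$. Then \[a_{m(\ell)}(n)=a_{(m-1)(\ell)}(2n+\ell-r,\,n+\ell-r).\]
   Context: An $\ell$-regular partition is a partition with no part divisible by $\ell$. $a_{m(\ell)}(n)$ is the number of $\ell$-regular partitions of $n$ in which the smallest part occurs at least $m$ times. $a_{m(\ell)}(N,j)$ is the number of $\ell$-regular partitions of $N$ in which the smallest part occurs at least $m$ times and the largest part minus the smallest part equals $j$. $b_\ell(N,j)$ is the number of $\ell$-regular partitions of $N$ in which the largest part minus the smallest part equals $j$. *)

theory Defs
  imports Main "HOL-Library.Multiset"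
begin

definition partitions :: "nat \<Rightarrow> nat multiset set" where
  "partitions N = {p. (\<forall>x\<in>#p. 0 < x) \<and> sum_mset p = N}"

definition regular :: "nat \<Rightarrow> nat multiset \<Rightarrow> bool" where
  "regular l p \<longleftrightarrow> (\<forall>x\<in>#p. \<not> l dvd x)"

definition smallest_part :: "nat multiset \<Rightarrow> nat" where
  "smallest_part p = Min (set_mset p)"

definition largest_part :: "nat multiset \<Rightarrow> nat" where
  "largest_part p = Max (set_mset p)"

definition a_reg :: "nat \<Rightarrow> nat \<Rightarrow> nat \<Rightarrow> nat" where
  "a_reg m l n = card {p \<in> partitions n. p \<noteq> {#} \<and> regular l p
                        \<and> m \<le> count p (smallest_part p)}"

definition a_reg2 :: "nat \<Rightarrow> nat \<Rightarrow> nat \<Rightarrow> nat \<Rightarrow> nat" where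
  "a_reg2 m l N j = card {p \<in> partitions N. p \<noteq> {#} \<and> regular l p
                        \<and> m \<le> count p (smallest_part p)
                        \<and> largest_part p - smallest_part p = j}"

definition b_reg :: "nat \<Rightarrow> nat \<Rightarrow> nat \<Rightarrow> nat" where
  "b_reg l N j = card {p \<in> partitions N. p \<noteq> {#} \<and> regular l p
                        \<and> largest_part p - smallest_part p = j}"

end

theory Submission
  imports Defs
begin

text \<open>Remove one copy of the smallest part \<open>s\<close> of a partition of \<open>n\<close> and add a part \<open>s + j\<close>.
  If \<open>j \<ge> n\<close>, the new part dominates all remaining parts (which sum to \<open>n - s\<close>), so it is the
  largest part and the difference between largest and smallest part is exactly \<open>j\<close>; the smallest
  part survives because it occurred at least twice, and \<open>l dvd j\<close> keeps the new part \<open>l\<close>-regular.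
  Replacing the largest part by a copy of the smallest inverts this. For \<open>n = l k + r\<close> take
  \<open>j = n + l - r = l (k + 1)\<close>; the first claim is the case \<open>m = l = 2\<close>, \<open>r = 1\<close>, because a
  nonempty partition always contains its smallest part at least once.\<close>

lemma smallest_part_in: "p \<noteq> {#} \<Longrightarrow> smallest_part p \<in># p"
  unfolding smallest_part_def by simp

lemma smallest_part_le: "x \<in># p \<Longrightarrow> smallest_part p \<le> x"
  unfolding smallest_part_def by simp

lemma smallest_part_eqI: "s \<in># p \<Longrightarrow> (\<And>x. x \<in># p \<Longrightarrow> s \<le> x) \<Longrightarrow> smallest_part p = s"
  unfolding smallest_part_def by (rule Min_eqI) auto

lemma largest_part_in: "p \<noteq> {#} \<Longrightarrow> largest_part p \<in># p"
  unfolding largest_part_def by simp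

lemma largest_part_eqI: "L \<in># p \<Longrightarrow> (\<And>x. x \<in># p \<Longrightarrow> x \<le> L) \<Longrightarrow> largest_part p = L"
  unfolding largest_part_def by (rule Max_eqI) auto

lemma count_smallest_part_pos: "p \<noteq> {#} \<Longrightarrow> 0 < count p (smallest_part p)"
  using smallest_part_in by simp

lemma member_le_sum_mset: "x \<in># M \<Longrightarrow> x \<le> sum_mset (M :: nat multiset)"
  using sum_mset.remove[of x M] by simp

definition raise_smallest :: "nat \<Rightarrow> nat multiset \<Rightarrow> nat multiset" where
  "raise_smallest j p = add_mset (smallest_part p + j) (p - {#smallest_part p#})"

definition lower_largest :: "nat multiset \<Rightarrow> nat multiset" where
  "lower_largest q = add_mset (smallest_part q) (q - {#largest_part q#})"

lemma
  fixes p :: "nat multiset"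
  assumes two: "2 \<le> count p (smallest_part p)" and j: "0 < j" "sum_mset p \<le> j"
  shows smallest_part_raise_smallest: "smallest_part (raise_smallest j p) = smallest_part p"
    and largest_part_raise_smallest: "largest_part (raise_smallest j p) = smallest_part p + j"
    and count_raise_smallest: "count (raise_smallest j p) (smallest_part p) = count p (smallest_part p) - 1"
    and sum_mset_raise_smallest: "sum_mset (raise_smallest j p) = sum_mset p + j"
    and lower_largest_raise_smallest: "lower_largest (raise_smallest j p) = p"
proof -
  let ?s = "smallest_part p"
  have s_in_rest: "?s \<in># p - {#?s#}"
    using two by (simp add: in_diff_count)
  then have s_in: "?s \<in># p"
    by (rule in_diffD)
  have rest_sum: "sum_mset (p - {#?s#}) + ?s = sum_mset p"
    using sum_mset.remove[OF s_in] by simp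
  show smallest: "smallest_part (raise_smallest j p) = ?s"
    unfolding raise_smallest_def
    by (rule smallest_part_eqI) (use s_in_rest in \<open>auto dest: in_diffD intro: smallest_part_le\<close>)
  have "x \<le> ?s + j" if "x \<in># p - {#?s#}" for x
    using member_le_sum_mset[OF that] rest_sum j by linarith
  then show largest: "largest_part (raise_smallest j p) = ?s + j"
    unfolding raise_smallest_def by (intro largest_part_eqI) auto
  show "count (raise_smallest j p) ?s = count p ?s - 1"
    unfolding raise_smallest_def using j by simp
  show "sum_mset (raise_smallest j p) = sum_mset p + j"
    unfolding raise_smallest_def using rest_sum by simp
  show "lower_largest (raise_smallest j p) = p"
    unfolding lower_largest_def smallest largest
    by (simp add: raise_smallest_def s_in)
qed

lemma
  fixes q :: "nat multiset"
  assumes q: "q \<noteq> {#}" and j: "0 < j" "largest_part q - smallest_part q = j"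
  shows smallest_part_lower_largest: "smallest_part (lower_largest q) = smallest_part q"
    and count_lower_largest: "count (lower_largest q) (smallest_part q) = count q (smallest_part q) + 1"
    and sum_mset_lower_largest: "sum_mset (lower_largest q) + j = sum_mset q"
    and raise_smallest_lower_largest: "raise_smallest j (lower_largest q) = q"
proof -
  let ?s = "smallest_part q" and ?L = "largest_part q"
  have L_in: "?L \<in># q" using largest_part_in[OF q] .
  have L_eq: "?L = ?s + j"
    using j smallest_part_le[OF L_in] by linarith
  show smallest: "smallest_part (lower_largest q) = ?s"
    unfolding lower_largest_def
    by (rule smallest_part_eqI) (auto dest: in_diffD intro: smallest_part_le)
  show "count (lower_largest q) ?s = count q ?s + 1"
    unfolding lower_largest_def using L_eq j by simp
  show "sum_mset (lower_largest q) + j = sum_mset q"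
    unfolding lower_largest_def using sum_mset.remove[OF L_in] L_eq by simp
  show "raise_smallest j (lower_largest q) = q"
    unfolding raise_smallest_def smallest using L_in L_eq
    by (simp add: lower_largest_def)
qed

lemma a_reg_eq_a_reg2_raise:
  assumes m: "2 \<le> m" and j: "0 < j" "n \<le> j" and l: "l dvd j"
  shows "a_reg m l n = a_reg2 (m - 1) l (n + j) j"
proof -
  define A where "A = {p \<in> partitions n. p \<noteq> {#} \<and> regular l p \<and> m \<le> count p (smallest_part p)}"
  define B where "B = {q \<in> partitions (n + j). q \<noteq> {#} \<and> regular l q
                        \<and> m - 1 \<le> count q (smallest_part q)
                        \<and> largest_part q - smallest_part q = j}"
  have raise_in_B: "raise_smallest j p \<in> B" if "p \<in> A" for p
  proof -
    let ?s = "smallest_part p"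
    have p: "p \<noteq> {#}" "\<forall>x\<in>#p. 0 < x" "sum_mset p = n" "regular l p" "m \<le> count p ?s"
      using that by (auto simp: A_def partitions_def)
    have "\<not> l dvd ?s + j"
      using p(4) smallest_part_in[OF p(1)] l by (auto simp: regular_def dvd_add_left_iff)
    then have "regular l (raise_smallest j p)"
      using p(4) by (auto simp: regular_def raise_smallest_def dest: in_diffD)
    moreover have "\<forall>x\<in>#raise_smallest j p. 0 < x"
      using p(2) j by (auto simp: raise_smallest_def dest: in_diffD)
    ultimately show ?thesis
      using p m j smallest_part_raise_smallest largest_part_raise_smallest
        count_raise_smallest sum_mset_raise_smallest
      by (auto simp: B_def partitions_def raise_smallest_def)
  qed
  have lower_in_A: "lower_largest q \<in> A" if "q \<in> B" for q
  proof -
    have q: "q \<noteq> {#}" "\<forall>x\<in>#q. 0 < x" "sum_mset q = n + j" "regular l q"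
        "m - 1 \<le> count q (smallest_part q)" "largest_part q - smallest_part q = j"
      using that by (auto simp: B_def partitions_def)
    have "set_mset (lower_largest q) \<subseteq> set_mset q"
      using smallest_part_in[OF q(1)] by (auto simp: lower_largest_def dest: in_diffD)
    moreover have "sum_mset (lower_largest q) = n"
      using sum_mset_lower_largest[OF q(1) j(1) q(6)] q(3) by simp
    moreover have "m \<le> count (lower_largest q) (smallest_part (lower_largest q))"
      using count_lower_largest[OF q(1) j(1) q(6)] smallest_part_lower_largest[OF q(1) j(1) q(6)]
        q(5) m by simp
    moreover have "lower_largest q \<noteq> {#}"
      by (simp add: lower_largest_def)
    ultimately show ?thesis
      using q(2,4) by (auto simp: A_def partitions_def regular_def)
  qed
  have "bij_betw (raise_smallest j) A B"
  proof (rule bij_betw_byWitness[where f' = lower_largest])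
    show "\<forall>p\<in>A. lower_largest (raise_smallest j p) = p"
      using m j by (auto simp: A_def partitions_def intro!: lower_largest_raise_smallest)
    show "\<forall>q\<in>B. raise_smallest j (lower_largest q) = q"
      using j by (auto simp: B_def intro!: raise_smallest_lower_largest)
  qed (use raise_in_B lower_in_A in auto)
  then show ?thesis
    unfolding a_reg_def a_reg2_def A_def B_def by (rule bij_betw_same_card)
qed

lemma a_reg2_one_eq_b_reg: "a_reg2 1 l N j = b_reg l N j"
  unfolding a_reg2_def b_reg_def
  using count_smallest_part_pos by (metis One_nat_def Suc_leI)

theorem theorem5p6:
  shows "(\<forall>n::nat. 1 \<le> n \<and> odd n \<longrightarrow> a_reg 2 2 n = b_reg 2 (2*n+1) (n+1))
       \<and> (\<forall>(m::nat) (l::nat) (n::nat) (k::nat) (r::nat).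
            2 \<le> m \<and> 2 \<le> l \<and> 1 \<le> n \<and> \<not> l dvd n \<and> n = l*k + r \<and> 1 \<le> r \<and> r < l
            \<longrightarrow> a_reg m l n = a_reg2 (m-1) l (2*n + l - r) (n + l - r))"
proof (intro conjI allI impI)
  fix n :: nat
  assume "1 \<le> n \<and> odd n"
  then have "2 dvd n + 1" by simp
  then have "a_reg 2 2 n = a_reg2 1 2 (n + (n + 1)) (n + 1)"
    using a_reg_eq_a_reg2_raise[of 2 "n + 1" n 2] by simp
  then show "a_reg 2 2 n = b_reg 2 (2*n+1) (n+1)"
    using a_reg2_one_eq_b_reg[of 2 "2*n+1" "n+1"] by (simp add: mult_2)
next
  fix m l n k r :: nat
  assume h: "2 \<le> m \<and> 2 \<le> l \<and> 1 \<le> n \<and> \<not> l dvd n \<and> n = l*k + r \<and> 1 \<le> r \<and> r < l"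
  then have j: "n + l - r = l * (k + 1)" and N: "2*n + l - r = n + (n + l - r)"
    by (simp_all add: algebra_simps)
  have "a_reg m l n = a_reg2 (m-1) l (n + (n + l - r)) (n + l - r)"
    by (rule a_reg_eq_a_reg2_raise) (use h j in auto)
  then show "a_reg m l n = a_reg2 (m-1) l (2*n + l - r) (n + l - r)"
    unfolding N .
qed

end
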